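(* Let $\gamma>0$. For each $n\in\mathbb{N}$ and $j=0,\dots,n$ let $a(n,j)\in(0,1)$ and $b(n,j)>0$, and suppose $$\lim_{n\to\infty}\frac{\log b(n,j)}{\log a(n,j)}=\gamma$$ uniformly in $j$ (i.e. for every $\varepsilon>0$ there is $n_0$ with $|\log b(n,j)/\log a(n,j)-\gamma|<\varepsilon$ for all $n\ge n_0$ and all $j=0,\dots,n$). Define $A_k(n)=\prod_{j=k}^n a(n,j)$ and $B_k(n)=\prod_{j=k}^n b(n,j)$. Then $\lim_{n\to\infty}\big(A_k(n)^\gamma-B_k(n)\big)=0$ uniformly in $k\in\{0,\dots,n\}$. *)

theory Defs
  imports Complex_Main
begin

definition Aprod :: "(nat \<Rightarrow> nat \<Rightarrow> real) \<Rightarrow> nat \<Rightarrow> nat \<Rightarrow> real" where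
  "Aprod a k n = (\<Prod>j=k..n. a n j)"

end

theory Submission
  imports Defs
begin

(*
  Write A = (\<Prod>j. a j) and B = (\<Prod>j. b j) over a finite index set and put
  t = -ln A = -(\<Sum>j. ln (a j)) \<ge> 0 and y = ln B = \<Sum>j. ln (b j).  If every ratio
  ln (b j) / ln (a j) is within \<delta> of \<gamma>, then, since all ln (a j) are negative,
  |ln (b j) - \<gamma> ln (a j)| \<le> \<delta> (-ln (a j)), and summing gives |y + \<gamma> t| \<le> \<delta> t.
  So A powr \<gamma> = exp (-\<gamma> t) and B = exp y are exponentials of two numbers that
  are both \<le> -(\<gamma>/2) t once \<delta> \<le> \<gamma>/2, and the elementary estimates
  |exp u - exp v| \<le> |u - v| exp (max u v) and t exp (-(\<gamma>/2) t) \<le> 2/\<gamma> give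
  |A powr \<gamma> - B| \<le> 2\<delta>/\<gamma>: a bound that depends neither on t nor on the index set.
*)

(* Mean-value bound for exp: the difference of two exponentials is at most the
   distance of the exponents times the larger exponential (convexity of exp). *)
lemma abs_exp_diff_le:
  fixes u v :: real
  shows "\<bar>exp u - exp v\<bar> \<le> \<bar>u - v\<bar> * exp (max u v)"
proof -
  have ordered: "exp u - exp v \<le> (u - v) * exp u" if "v \<le> u" for u v :: real
  proof -
    have "exp u * (1 + (v - u)) \<le> exp u * exp (v - u)"
      using exp_ge_add_one_self[of "v - u"] by simp
    thus ?thesis by (simp add: exp_diff algebra_simps)
  qed
  show ?thesis
  proof (cases "v \<le> u")
    case True
    thus ?thesis using ordered[OF True] by (simp add: max_def)
  next
    case False
    thus ?thesis using ordered[of u v] by (simp add: max_def abs_minus_commute)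
  qed
qed

lemma mult_exp_neg_le:
  fixes c t :: real
  assumes "c > 0" "t \<ge> 0"
  shows "t * exp (- c * t) \<le> 1 / c"
proof -
  have "c * t \<le> exp (c * t)"
    using exp_ge_add_one_self[of "c * t"] by linarith
  hence "t \<le> exp (c * t) / c"
    using assms(1) by (simp add: field_simps)
  hence "t * exp (- c * t) \<le> exp (c * t) / c * exp (- c * t)"
    by (intro mult_right_mono) auto
  also have "\<dots> = 1 / c" by (simp flip: exp_add)
  finally show ?thesis .
qed

(* If y is within \<delta> t of -\<gamma> t with \<delta> \<le> \<gamma>/2, then exp y is within 2\<delta>/\<gamma> of exp (-\<gamma> t),
   uniformly in t \<ge> 0: both exponents lie below -(\<gamma>/2) t, which absorbs the factor t. *)
lemma exp_close_uniform:
  fixes \<gamma> \<delta> t y :: real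
  assumes "\<gamma> > 0" "0 \<le> \<delta>" "\<delta> \<le> \<gamma> / 2" "t \<ge> 0"
    and close: "\<bar>y + \<gamma> * t\<bar> \<le> \<delta> * t"
  shows "\<bar>exp (- \<gamma> * t) - exp y\<bar> \<le> 2 * \<delta> / \<gamma>"
proof -
  have "\<delta> * t \<le> \<gamma> / 2 * t" using assms(3,4) by (rule mult_right_mono)
  hence below: "max (- \<gamma> * t) y \<le> - (\<gamma> / 2) * t"
    using close assms(1,4) by auto
  have "\<bar>exp (- \<gamma> * t) - exp y\<bar> \<le> \<bar>- \<gamma> * t - y\<bar> * exp (max (- \<gamma> * t) y)"
    by (rule abs_exp_diff_le)
  also have "\<dots> \<le> (\<delta> * t) * exp (- (\<gamma> / 2) * t)"
    using close below assms(2,4) by (intro mult_mono) (auto simp: abs_minus_commute add.commute)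
  also have "\<dots> = \<delta> * (t * exp (- (\<gamma> / 2) * t))" by simp
  also have "\<dots> \<le> \<delta> * (1 / (\<gamma> / 2))"
    using mult_exp_neg_le[of "\<gamma> / 2" t] assms by (intro mult_left_mono) auto
  also have "\<dots> = 2 * \<delta> / \<gamma>" by simp
  finally show ?thesis .
qed

lemma ln_ratio_close:
  fixes a b \<gamma> \<delta> :: real
  assumes "0 < a" "a < 1" "\<bar>ln b / ln a - \<gamma>\<bar> \<le> \<delta>"
  shows "\<bar>ln b - \<gamma> * ln a\<bar> \<le> \<delta> * (- ln a)"
proof -
  have neg: "ln a < 0" using assms(1,2) by simp
  have "ln b - \<gamma> * ln a = (ln b / ln a - \<gamma>) * ln a"
    using neg by (simp add: field_simps)
  hence "\<bar>ln b - \<gamma> * ln a\<bar> = \<bar>ln b / ln a - \<gamma>\<bar> * (- ln a)"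
    using neg by (simp add: abs_mult)
  also have "\<dots> \<le> \<delta> * (- ln a)" using assms(3) neg by (intro mult_right_mono) auto
  finally show ?thesis .
qed

lemma prod_powr_close:
  fixes a b :: "'i \<Rightarrow> real" and S :: "'i set" and \<gamma> \<delta> :: real
  assumes "finite S" "\<gamma> > 0" "0 \<le> \<delta>" "\<delta> \<le> \<gamma> / 2"
    and a: "\<And>j. j \<in> S \<Longrightarrow> 0 < a j \<and> a j < 1"
    and b: "\<And>j. j \<in> S \<Longrightarrow> 0 < b j"
    and ratio: "\<And>j. j \<in> S \<Longrightarrow> \<bar>ln (b j) / ln (a j) - \<gamma>\<bar> \<le> \<delta>"
  shows "\<bar>(\<Prod>j\<in>S. a j) powr \<gamma> - (\<Prod>j\<in>S. b j)\<bar> \<le> 2 * \<delta> / \<gamma>"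
proof -
  define t where "t = - (\<Sum>j\<in>S. ln (a j))"
  define y where "y = (\<Sum>j\<in>S. ln (b j))"
  have t_nonneg: "t \<ge> 0"
    unfolding t_def using a by (simp add: sum_nonpos less_imp_le)
  have A_pos: "(\<Prod>j\<in>S. a j) > 0" using a by (simp add: prod_pos)
  have B_pos: "(\<Prod>j\<in>S. b j) > 0" using b by (simp add: prod_pos)
  have "ln (\<Prod>j\<in>S. a j) = - t"
    unfolding t_def using a by (subst ln_prod[OF assms(1)]) force+
  hence A_eq: "(\<Prod>j\<in>S. a j) powr \<gamma> = exp (- \<gamma> * t)"
    using A_pos by (simp add: powr_def)
  have "ln (\<Prod>j\<in>S. b j) = y"
    unfolding y_def using b by (subst ln_prod[OF assms(1)]) force+
  hence B_eq: "(\<Prod>j\<in>S. b j) = exp y"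
    using B_pos by (metis exp_ln)
  have "\<bar>y + \<gamma> * t\<bar> = \<bar>\<Sum>j\<in>S. ln (b j) - \<gamma> * ln (a j)\<bar>"
    unfolding y_def t_def by (simp add: sum_subtractf sum_distrib_left)
  also have "\<dots> \<le> (\<Sum>j\<in>S. \<bar>ln (b j) - \<gamma> * ln (a j)\<bar>)" by (rule sum_abs)
  also have "\<dots> \<le> (\<Sum>j\<in>S. \<delta> * (- ln (a j)))"
    using a ratio ln_ratio_close by (intro sum_mono) blast
  also have "\<dots> = \<delta> * t" unfolding t_def by (simp add: sum_distrib_left sum_negf)
  finally have "\<bar>y + \<gamma> * t\<bar> \<le> \<delta> * t" .
  thus ?thesis
    unfolding A_eq B_eq using exp_close_uniform assms(2-4) t_nonneg by blast
qed

theorem mainTheorem17: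
  fixes a b :: "nat \<Rightarrow> nat \<Rightarrow> real" and \<gamma> :: real
  assumes "\<gamma> > 0"
    and "\<And>n j. j \<le> n \<Longrightarrow> 0 < a n j \<and> a n j < 1"
    and "\<And>n j. j \<le> n \<Longrightarrow> 0 < b n j"
    and "\<forall>\<epsilon>>0. \<exists>n0. \<forall>n\<ge>n0. \<forall>j\<le>n.
           \<bar>ln (b n j) / ln (a n j) - \<gamma>\<bar> < \<epsilon>"
  shows "\<forall>\<epsilon>>0. \<exists>n0. \<forall>n\<ge>n0. \<forall>k\<le>n.
           \<bar>(Aprod a k n) powr \<gamma> - Aprod b k n\<bar> < \<epsilon>"
proof (intro allI impI)
  fix \<epsilon> :: real
  assume "\<epsilon> > 0"
  define \<delta> where "\<delta> = min (\<gamma> / 2) (\<epsilon> * \<gamma> / 4)"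
  have \<delta>_pos: "\<delta> > 0" using \<open>\<epsilon> > 0\<close> assms(1) by (simp add: \<delta>_def)
  obtain n0 where n0: "\<forall>n\<ge>n0. \<forall>j\<le>n. \<bar>ln (b n j) / ln (a n j) - \<gamma>\<bar> < \<delta>"
    using assms(4) \<delta>_pos by blast
  have "\<bar>(Aprod a k n) powr \<gamma> - Aprod b k n\<bar> < \<epsilon>" if "n \<ge> n0" for n k
  proof -
    have "\<bar>(Aprod a k n) powr \<gamma> - Aprod b k n\<bar> \<le> 2 * \<delta> / \<gamma>"
      unfolding Aprod_def using n0 \<open>n \<ge> n0\<close> assms(1-3) \<delta>_pos
      by (intro prod_powr_close) (auto simp: \<delta>_def less_imp_le)
    also have "\<dots> \<le> 2 * (\<epsilon> * \<gamma> / 4) / \<gamma>"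
      using assms(1) by (intro divide_right_mono) (auto simp: \<delta>_def)
    also have "\<dots> < \<epsilon>" using \<open>\<epsilon> > 0\<close> assms(1) by simp
    finally show ?thesis .
  qed
  thus "\<exists>n0. \<forall>n\<ge>n0. \<forall>k\<le>n. \<bar>(Aprod a k n) powr \<gamma> - Aprod b k n\<bar> < \<epsilon>" by blast
qed

end
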